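(* For $n\geqslant 3$ let $M_n$ be the maximum, over all pairs $(G,S)$ of caterpillar trees with $n$ leaves bijectively labeled by the same label set and with $G$ and $S$ of different labeled topologies, of the number of coalescent histories for $(G,S)$. Then $M_n\sim C_{n-1}$ as $n\to\infty$, where $C_m=\frac{1}{m+1}\binom{2m}{m}$.
   Context: All trees are binary, rooted, leaf-labeled. A caterpillar tree is one in which some internal node is descended from all other internal nodes. For a caterpillar with $n$ leaves, internal nodes are numbered $1,\dots,n-1$ from the cherry (internal node with exactly two descendant leaves) to the root, and internal edge $i$ is the edge immediately above node $i$, with an extra edge $n-1$ above the root. A coalescent history for a gene tree $G$ and species tree $S$ is a map $h$ from internal nodes of $G$ to internal edges of $S$ such that (1) every label of a leaf below node $v$ of $G$ labels a leaf of $S$ below edge $h(v)$, and (2) if $v_2$ is descended from $v_1$ in $G$ then $h(v_2)$ is descended from $h(v_1)$ in $S$ (objects are descended from themselves). $a_n\sim b_n$ means $a_n/b_n\to 1$. *)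

theory Defs
  imports Complex_Main "HOL-Library.FuncSet"
begin

text \<open>A caterpillar tree with n leaves labelled bijectively by {0..<n} is encoded by a
  list \<sigma> listing all labels: \<sigma>!0 and \<sigma>!1 are the two leaves of the cherry (internal node 1),
  and for k \<ge> 2 the leaf \<sigma>!k is the leaf child of internal node k.  Internal nodes are
  numbered 1..n-1 from the cherry to the root; internal node i has descendant leaf set
  set (take (i+1) \<sigma>).  Internal edge i lies immediately above node i (edge n-1 above root),
  so the leaves below edge i are those below node i, and node/edge j is descended from
  node/edge i iff j \<le> i.\<close>

definition caterpillars :: "nat \<Rightarrow> nat list set" where
  "caterpillars n = {\<sigma>. distinct \<sigma> \<and> set \<sigma> = {..<n}}"

definition cat_clade :: "nat list \<Rightarrow> nat \<Rightarrow> nat set" where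
  "cat_clade \<sigma> i = set (take (i + 1) \<sigma>)"

definition same_topology :: "nat \<Rightarrow> nat list \<Rightarrow> nat list \<Rightarrow> bool" where
  "same_topology n G S \<longleftrightarrow> (\<forall>i\<in>{1..n-1}. cat_clade G i = cat_clade S i)"

definition coalescent_history :: "nat \<Rightarrow> nat list \<Rightarrow> nat list \<Rightarrow> (nat \<Rightarrow> nat) \<Rightarrow> bool" where
  "coalescent_history n G S h \<longleftrightarrow>
     (\<forall>v\<in>{1..n-1}. cat_clade G v \<subseteq> cat_clade S (h v)) \<and>
     (\<forall>v1\<in>{1..n-1}. \<forall>v2\<in>{1..n-1}. v2 \<le> v1 \<longrightarrow> h v2 \<le> h v1)"

definition num_histories :: "nat \<Rightarrow> nat list \<Rightarrow> nat list \<Rightarrow> nat" where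
  "num_histories n G S =
     card {h \<in> {1..n-1} \<rightarrow>\<^sub>E {1..n-1}. coalescent_history n G S h}"

definition max_histories :: "nat \<Rightarrow> nat" where
  "max_histories n = Max {num_histories n G S | G S.
      G \<in> caterpillars n \<and> S \<in> caterpillars n \<and> \<not> same_topology n G S}"

definition catalan :: "nat \<Rightarrow> real" where
  "catalan m = real ((2 * m) choose m) / real (m + 1)"

end

theory Submission
  imports Defs "HOL-Combinatorics.Transposition"
begin

text \<open>
  If h is a coalescent history of two caterpillars, node v of G has v + 1 leaves below it and
  edge h v of S has h v + 1, so v \<le> h v; together with monotonicity this makes h a ballot
  map on {1..n-1}, and there are C(n-1) of those. Hence M(n) \<le> C(n-1).

  Conversely, let G arise from S by exchanging the leaves in positions p and p + 1. Every ballot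
  map with h p \<noteq> p is then a history for (G, S), while a ballot map with h p = p splits into
  ballot maps on {1..p} and on {p+1..n-1}, so at most C(p) C(n-1-p) maps are lost. For
  p = n div 2 the elementary bounds 4^m \<le> 2m(m+1) C(m) and C(m)^2 (m+1)^3 \<le> 16^m show
  that this loss is at most 16 C(n-1) / n.
\<close>

section \<open>Estimates for Catalan numbers\<close>

lemma central_binomial_Suc:
  "Suc m * (2 * Suc m choose Suc m) = 2 * Suc (2 * m) * (2 * m choose m)"
proof -
  have sym: "Suc (2 * m) choose m = Suc (2 * m) choose Suc m"
    using binomial_symmetric[of m "Suc (2 * m)"] by (simp del: binomial_Suc_Suc)
  have "Suc m * (Suc m * (2 * Suc m choose Suc m))
          = Suc m * (Suc (Suc (2 * m)) * (Suc (2 * m) choose m))"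
    using Suc_times_binomial[of m "Suc (2 * m)"] by (simp del: binomial_Suc_Suc)
  also have "\<dots> = Suc (Suc (2 * m)) * (Suc m * (Suc (2 * m) choose Suc m))"
    by (simp only: sym mult.left_commute)
  also have "\<dots> = Suc m * (2 * Suc (2 * m) * (2 * m choose m))"
    by (simp only: Suc_times_binomial) simp
  finally show ?thesis
    by (metis mult_left_cancel nat.distinct(1))
qed

text \<open>The factor 3m + 1 is what lets the induction close: (2m+1)^2 (3m+4) \<le> 4 (m+1)^2 (3m+1).\<close>

lemma central_binomial_upper_bound:
  "real ((2 * m) choose m) ^ 2 * (3 * real m + 1) \<le> 16 ^ m"
proof (induction m)
  case 0
  then show ?case
    by simp
next
  case (Suc m)
  define b b' where "b = real ((2 * m) choose m)" and "b' = real ((2 * Suc m) choose Suc m)"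
  have rec: "(real m + 1) * b' = 2 * (2 * real m + 1) * b"
    using arg_cong[OF central_binomial_Suc[of m], of real]
    by (simp add: b_def b'_def algebra_simps del: binomial_Suc_Suc)
  have poly: "(2 * real m + 1) ^ 2 * (3 * real m + 4) \<le> 4 * (real m + 1) ^ 2 * (3 * real m + 1)"
    by (simp add: power2_eq_square algebra_simps)
  have "(real m + 1) ^ 2 * (b' ^ 2 * (3 * real (Suc m) + 1))
          = ((real m + 1) * b') ^ 2 * (3 * real m + 4)"
    unfolding of_nat_Suc by algebra
  also have "\<dots> = 4 * b ^ 2 * ((2 * real m + 1) ^ 2 * (3 * real m + 4))"
    unfolding rec by algebra
  also have "\<dots> \<le> 4 * b ^ 2 * (4 * (real m + 1) ^ 2 * (3 * real m + 1))"
    using poly by (intro mult_left_mono) auto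
  also have "\<dots> = 16 * (real m + 1) ^ 2 * (b ^ 2 * (3 * real m + 1))"
    by (simp add: algebra_simps)
  also have "\<dots> \<le> 16 * (real m + 1) ^ 2 * 16 ^ m"
    using Suc.IH by (intro mult_left_mono) (auto simp: b_def)
  finally have "(real m + 1) ^ 2 * (b' ^ 2 * (3 * real (Suc m) + 1))
                  \<le> (real m + 1) ^ 2 * 16 ^ Suc m"
    by simp
  then show ?case
    by (simp add: b'_def)
qed

lemma catalan_pos: "0 < catalan m"
  by (simp add: catalan_def)

lemma Suc_times_catalan: "(real m + 1) * catalan m = real ((2 * m) choose m)"
  by (simp add: catalan_def field_simps)

lemma catalan_squared_upper_bound: "catalan m ^ 2 * (real m + 1) ^ 3 \<le> 16 ^ m"
proof -
  have "catalan m ^ 2 * (real m + 1) ^ 3 = ((real m + 1) * catalan m) ^ 2 * (real m + 1)"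
    by algebra
  also have "\<dots> = real ((2 * m) choose m) ^ 2 * (real m + 1)"
    by (simp only: Suc_times_catalan)
  also have "\<dots> \<le> real ((2 * m) choose m) ^ 2 * (3 * real m + 1)"
    by (intro mult_left_mono) auto
  also have "\<dots> \<le> 16 ^ m"
    by (rule central_binomial_upper_bound)
  finally show ?thesis .
qed

lemma catalan_lower_bound:
  assumes "0 < m"
  shows "4 ^ m \<le> 2 * real m * (real m + 1) * catalan m"
proof -
  have "4 ^ m \<le> 2 * real m * real ((2 * m) choose m)"
    using central_binomial_lower_bound[OF assms] assms by (simp add: field_simps)
  also have "\<dots> = 2 * real m * (real m + 1) * catalan m"
    by (simp only: mult.assoc Suc_times_catalan)
  finally show ?thesis .
qed

lemma catalan_product_le:
  assumes "0 < p + q"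
  shows "(catalan p * catalan q) ^ 2 * ((real p + 1) * (real q + 1)) ^ 3
           \<le> (2 * real (p + q) * (real (p + q) + 1) * catalan (p + q)) ^ 2"
proof -
  have "(catalan p * catalan q) ^ 2 * ((real p + 1) * (real q + 1)) ^ 3
          = (catalan p ^ 2 * (real p + 1) ^ 3) * (catalan q ^ 2 * (real q + 1) ^ 3)"
    by (simp add: power_mult_distrib)
  also have "\<dots> \<le> 16 ^ p * 16 ^ q"
    by (intro mult_mono catalan_squared_upper_bound) auto
  also have "\<dots> = 16 ^ (p + q)"
    by (simp add: power_add)
  also have "\<dots> = (4 ^ (p + q)) ^ 2"
    by (simp add: power2_eq_square flip: power_mult_distrib)
  also have "\<dots> \<le> (2 * real (p + q) * (real (p + q) + 1) * catalan (p + q)) ^ 2"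
    by (rule power_mono[OF catalan_lower_bound[OF assms]]) simp
  finally show ?thesis .
qed

lemma catalan_balanced_product_le:
  assumes "2 \<le> n"
  shows "catalan (n div 2) * catalan (n - 1 - n div 2) \<le> 16 / real n * catalan (n - 1)"
proof -
  define p q where "p = n div 2" and "q = n - 1 - n div 2"
  define x where "x = catalan p * catalan q"
  have pq: "0 < p + q" "p + q = n - 1" "real (p + q) + 1 = real n"
    using assms by (auto simp: p_def q_def)
  have "n \<le> 2 * (p + 1)" "n \<le> 2 * (q + 1)"
    by (auto simp: p_def q_def)
  then have half: "real n / 2 \<le> real p + 1" "real n / 2 \<le> real q + 1"
    by (auto simp: field_simps)
  have "(x * (real n / 2) ^ 3) ^ 2 = x ^ 2 * ((real n / 2) * (real n / 2)) ^ 3"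
    by (simp add: power_mult_distrib power_divide power2_eq_square power3_eq_cube)
  also have "\<dots> \<le> x ^ 2 * ((real p + 1) * (real q + 1)) ^ 3"
    using half by (intro mult_left_mono power_mono mult_mono) auto
  also have "\<dots> \<le> (2 * real (p + q) * real n * catalan (p + q)) ^ 2"
    using catalan_product_le[OF pq(1)] pq(3) by (simp add: x_def)
  also have "\<dots> \<le> (2 * real n * real n * catalan (n - 1)) ^ 2"
    using pq(2) catalan_pos[of "n - 1"] by (intro power_mono) (auto intro!: mult_right_mono)
  finally have "x * (real n / 2) ^ 3 \<le> 2 * real n * real n * catalan (n - 1)"
    by (rule power2_le_imp_le) (simp add: catalan_pos less_imp_le)
  then show ?thesis
    using assms by (simp add: x_def p_def q_def field_simps power3_eq_cube)
qed

section \<open>Ballot maps\<close>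

definition ballot_maps :: "nat \<Rightarrow> nat \<Rightarrow> (nat \<Rightarrow> nat) set" where
  "ballot_maps L T = {h \<in> {1..L} \<rightarrow>\<^sub>E {1..T}.
     (\<forall>v\<in>{1..L}. v \<le> h v) \<and> (\<forall>v1\<in>{1..L}. \<forall>v2\<in>{1..L}. v2 \<le> v1 \<longrightarrow> h v2 \<le> h v1)}"

lemma finite_ballot_maps: "finite (ballot_maps L T)"
  by (rule finite_subset[of _ "{1..L} \<rightarrow>\<^sub>E {1..T}"])
     (auto simp: ballot_maps_def finite_PiE)

lemma ballot_maps_0: "ballot_maps 0 T = {\<lambda>_. undefined}"
  by (auto simp: ballot_maps_def)

lemma ballot_maps_Suc_empty: "ballot_maps (Suc T) T = {}"
proof -
  have "Suc T \<le> h (Suc T)" "h (Suc T) \<le> T" if "h \<in> ballot_maps (Suc T) T" for h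
    using that by (auto simp: ballot_maps_def PiE_def Pi_def)
  then show ?thesis
    by fastforce
qed

lemma ballot_maps_last_le:
  assumes "K \<le> T"
  shows "{h \<in> ballot_maps (Suc K) (Suc T). h (Suc K) \<le> T} = ballot_maps (Suc K) T"
proof (intro equalityI subsetI)
  fix h assume h: "h \<in> {h \<in> ballot_maps (Suc K) (Suc T). h (Suc K) \<le> T}"
  then have "\<forall>v\<in>{1..Suc K}. h v \<le> h (Suc K)"
    by (auto simp: ballot_maps_def)
  with h show "h \<in> ballot_maps (Suc K) T"
    by (fastforce simp: ballot_maps_def PiE_def Pi_def)
next
  fix h assume "h \<in> ballot_maps (Suc K) T"
  then show "h \<in> {h \<in> ballot_maps (Suc K) (Suc T). h (Suc K) \<le> T}"
    by (auto simp: ballot_maps_def PiE_def Pi_def)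
qed

lemma ballot_maps_last_eq:
  assumes "K \<le> T"
  shows "{h \<in> ballot_maps (Suc K) (Suc T). h (Suc K) = Suc T}
           = (\<lambda>g. g(Suc K := Suc T)) ` ballot_maps K (Suc T)"
proof (intro equalityI subsetI)
  fix h assume h: "h \<in> {h \<in> ballot_maps (Suc K) (Suc T). h (Suc K) = Suc T}"
  then have "h = (h(Suc K := undefined))(Suc K := Suc T)"
    by auto
  moreover have "h(Suc K := undefined) \<in> ballot_maps K (Suc T)"
    using h by (auto simp: ballot_maps_def PiE_def Pi_def extensional_def)
  ultimately show "h \<in> (\<lambda>g. g(Suc K := Suc T)) ` ballot_maps K (Suc T)"
    by blast
next
  fix h assume "h \<in> (\<lambda>g. g(Suc K := Suc T)) ` ballot_maps K (Suc T)"
  then obtain g where g: "g \<in> ballot_maps K (Suc T)" and h: "h = g(Suc K := Suc T)"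
    by blast
  then show "h \<in> {h \<in> ballot_maps (Suc K) (Suc T). h (Suc K) = Suc T}"
    using assms by (auto simp: ballot_maps_def PiE_def Pi_def extensional_def)
qed

lemma card_ballot_maps_Suc:
  assumes "K \<le> T"
  shows "card (ballot_maps (Suc K) (Suc T))
           = card (ballot_maps (Suc K) T) + card (ballot_maps K (Suc T))"
proof -
  let ?B = "ballot_maps (Suc K) (Suc T)"
  have split: "?B = {h \<in> ?B. h (Suc K) \<le> T} \<union> {h \<in> ?B. h (Suc K) = Suc T}"
    by (auto simp: ballot_maps_def PiE_def Pi_def)
  have "inj_on (\<lambda>g. g(Suc K := Suc T)) (ballot_maps K (Suc T))"
  proof (rule inj_onI)
    fix g1 g2 assume g: "g1 \<in> ballot_maps K (Suc T)" "g2 \<in> ballot_maps K (Suc T)"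
      and eq: "g1(Suc K := Suc T) = g2(Suc K := Suc T)"
    have "g1 (Suc K) = g2 (Suc K)"
      using g by (simp add: ballot_maps_def PiE_def extensional_def)
    then show "g1 = g2"
      using eq by (metis fun_upd_triv fun_upd_upd)
  qed
  then have "card {h \<in> ?B. h (Suc K) = Suc T} = card (ballot_maps K (Suc T))"
    using assms by (simp add: ballot_maps_last_eq card_image)
  moreover have "card ?B = card {h \<in> ?B. h (Suc K) \<le> T} + card {h \<in> ?B. h (Suc K) = Suc T}"
    by (subst split, rule card_Un_disjoint) (auto simp: finite_ballot_maps)
  ultimately show ?thesis
    using assms by (simp add: ballot_maps_last_le)
qed

text \<open>The ballot-number formula, written additively to avoid truncated subtraction.\<close>

lemma card_ballot_maps:
  assumes "K \<le> T"
  shows "card (ballot_maps (Suc K) T) + (T + Suc K choose K) = T + Suc K choose Suc K"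
  using assms
proof (induction "T + K" arbitrary: T K rule: less_induct)
  case less
  show ?case
  proof (cases "K = T")
    case True
    then show ?thesis
      using binomial_symmetric[of "Suc T" "T + Suc T"]
      by (simp add: ballot_maps_Suc_empty del: binomial_Suc_Suc)
  next
    case False
    then obtain T' where T: "T = Suc T'" and K: "K \<le> T'"
      using less.prems by (cases T) auto
    have IH1: "card (ballot_maps (Suc K) T') + (T' + Suc K choose K) = T' + Suc K choose Suc K"
      using less.hyps[of T' K] T K by simp
    have IH2: "card (ballot_maps K T) + (T' + Suc K choose (K - 1)) = T' + Suc K choose K"
      if "K \<noteq> 0"
      using less.hyps[of T "K - 1"] that T K by simp
    show ?thesis
    proof (cases K)
      case 0
      then show ?thesis
        using IH1 card_ballot_maps_Suc[OF K] by (simp add: T ballot_maps_0)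
    next
      case (Suc J)
      then show ?thesis
        using IH1 IH2 card_ballot_maps_Suc[OF K] by (simp add: T)
    qed
  qed
qed

lemma card_ballot_maps_catalan: "real (card (ballot_maps m m)) = catalan m"
proof (cases m)
  case 0
  then show ?thesis
    by (simp add: ballot_maps_0 catalan_def)
next
  case (Suc k)
  have "card (ballot_maps m m) + (2 * m choose k) = 2 * m choose m"
    using card_ballot_maps[of k m] Suc by (simp add: mult_2)
  then have "Suc m * card (ballot_maps m m) + Suc m * (2 * m choose k) = Suc m * (2 * m choose m)"
    by (metis add_mult_distrib2)
  moreover have "Suc m * (2 * m choose k) = m * (2 * m choose m)"
    using Suc_times_binomial_add[of k m] Suc by (simp add: mult_2 del: binomial_Suc_Suc)
  ultimately have "Suc m * card (ballot_maps m m) = 2 * m choose m"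
    by simp
  then have "(real m + 1) * real (card (ballot_maps m m)) = (real m + 1) * catalan m"
    unfolding Suc_times_catalan by (metis of_nat_Suc of_nat_mult add.commute)
  then show ?thesis
    by simp
qed

lemma restrict_ballot_maps_fixed:
  assumes h: "h \<in> ballot_maps N T" and p: "p \<in> {1..N}" and fixed: "h p = p"
  shows "restrict h {1..p} \<in> ballot_maps p p"
proof -
  have "h v \<in> {1..p}" if "v \<in> {1..p}" for v
  proof -
    have "v \<le> h v" "h v \<le> h p"
      using h p that by (auto simp: ballot_maps_def)
    then show ?thesis
      using that fixed by auto
  qed
  then show ?thesis
    using h p by (auto simp: ballot_maps_def)
qed

lemma ballot_maps_shift:
  assumes h: "h \<in> ballot_maps N T"
  shows "(\<lambda>u\<in>{1..N - p}. h (u + p) - p) \<in> ballot_maps (N - p) (T - p)"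
proof -
  have "u \<le> h (u + p) - p" "h (u + p) - p \<in> {1..T - p}" if "u \<in> {1..N - p}" for u
  proof -
    have "u + p \<le> h (u + p)" "h (u + p) \<le> T"
      using h that by (auto simp: ballot_maps_def PiE_def Pi_def)
    then show "u \<le> h (u + p) - p" "h (u + p) - p \<in> {1..T - p}"
      using that by auto
  qed
  moreover have "h (u2 + p) \<le> h (u1 + p)"
    if "u1 \<in> {1..N - p}" "u2 \<in> {1..N - p}" "u2 \<le> u1" for u1 u2
    using h that by (auto simp: ballot_maps_def)
  ultimately show ?thesis
    by (auto simp: ballot_maps_def diff_le_mono)
qed

definition ballot_split :: "nat \<Rightarrow> nat \<Rightarrow> (nat \<Rightarrow> nat) \<Rightarrow> (nat \<Rightarrow> nat) \<times> (nat \<Rightarrow> nat)" where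
  "ballot_split p N h = (restrict h {1..p}, \<lambda>u\<in>{1..N - p}. h (u + p) - p)"

lemma inj_on_ballot_split: "inj_on (ballot_split p N) (ballot_maps N T)"
proof (rule inj_onI, rule ext)
  fix h1 h2 v
  assume h: "h1 \<in> ballot_maps N T" "h2 \<in> ballot_maps N T"
    and eq: "ballot_split p N h1 = ballot_split p N h2"
  consider "v \<in> {1..p}" | "v \<in> {p<..N}" | "v \<notin> {1..N}"
    by fastforce
  then show "h1 v = h2 v"
  proof cases
    case 1
    then show ?thesis
      using fun_cong[OF arg_cong[OF eq, of fst], of v] by (simp add: ballot_split_def)
  next
    case 2
    then have "v - p \<in> {1..N - p}" "v - p + p = v"
      by auto
    then have "h1 v - p = h2 v - p"
      using fun_cong[OF arg_cong[OF eq, of snd], of "v - p"] by (simp add: ballot_split_def)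
    moreover have "v \<le> h1 v" "v \<le> h2 v"
      using h 2 by (auto simp: ballot_maps_def)
    ultimately show ?thesis
      using 2 by auto
  next
    case 3
    then show ?thesis
      using h by (auto simp: ballot_maps_def PiE_def extensional_def)
  qed
qed

lemma card_ballot_maps_fixed_le:
  assumes "p \<in> {1..N}"
  shows "card {h \<in> ballot_maps N N. h p = p}
           \<le> card (ballot_maps p p) * card (ballot_maps (N - p) (N - p))"
proof -
  have "ballot_split p N ` {h \<in> ballot_maps N N. h p = p}
          \<subseteq> ballot_maps p p \<times> ballot_maps (N - p) (N - p)"
    using restrict_ballot_maps_fixed[OF _ assms] ballot_maps_shift[of _ N N p]
    by (auto simp: ballot_split_def)
  then have "card {h \<in> ballot_maps N N. h p = p} \<le> card (ballot_maps p p \<times> ballot_maps (N - p) (N - p))"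
    by (intro card_inj_on_le[OF inj_on_subset[OF inj_on_ballot_split]])
       (auto simp: finite_ballot_maps)
  then show ?thesis
    by (simp add: card_cartesian_product)
qed

section \<open>Coalescent histories of caterpillars\<close>

lemma length_caterpillar: "\<sigma> \<in> caterpillars n \<Longrightarrow> length \<sigma> = n"
  unfolding caterpillars_def by (metis (mono_tags) card_lessThan distinct_card mem_Collect_eq)

lemma finite_caterpillars: "finite (caterpillars n)"
  by (rule finite_subset[OF _ finite_subset_distinct[of "{..<n}"]]) (auto simp: caterpillars_def)

lemma card_cat_clade:
  assumes "\<sigma> \<in> caterpillars n" "i < n"
  shows "card (cat_clade \<sigma> i) = i + 1"
  using assms length_caterpillar[OF assms(1)] unfolding cat_clade_def
  by (subst distinct_card) (auto simp: caterpillars_def distinct_take)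

lemma card_cat_clade_le: "card (cat_clade \<sigma> i) \<le> i + 1"
  unfolding cat_clade_def by (metis card_length length_take min.bounded_iff nle_le)

lemma coalescent_history_ge:
  assumes G: "G \<in> caterpillars n" and "coalescent_history n G S h" and v: "v \<in> {1..n - 1}"
  shows "v \<le> h v"
proof -
  have "v + 1 = card (cat_clade G v)"
    using card_cat_clade[OF G, of v] v by auto
  also have "\<dots> \<le> card (cat_clade S (h v))"
    using assms by (intro card_mono) (auto simp: cat_clade_def coalescent_history_def)
  also have "\<dots> \<le> h v + 1"
    by (rule card_cat_clade_le)
  finally show ?thesis
    by simp
qed

lemma coalescent_histories_subset_ballot_maps:
  assumes "G \<in> caterpillars n"
  shows "{h \<in> {1..n - 1} \<rightarrow>\<^sub>E {1..n - 1}. coalescent_history n G S h}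
           \<subseteq> ballot_maps (n - 1) (n - 1)"
proof
  fix h assume "h \<in> {h \<in> {1..n - 1} \<rightarrow>\<^sub>E {1..n - 1}. coalescent_history n G S h}"
  then have "h \<in> {1..n - 1} \<rightarrow>\<^sub>E {1..n - 1}" "coalescent_history n G S h"
    by auto
  then show "h \<in> ballot_maps (n - 1) (n - 1)"
    using coalescent_history_ge[OF assms] unfolding ballot_maps_def coalescent_history_def by blast
qed

lemma num_histories_le_catalan:
  assumes "G \<in> caterpillars n"
  shows "real (num_histories n G S) \<le> catalan (n - 1)"
proof -
  have "num_histories n G S \<le> card (ballot_maps (n - 1) (n - 1))"
    unfolding num_histories_def
    by (rule card_mono[OF finite_ballot_maps coalescent_histories_subset_ballot_maps[OF assms]])
  then show ?thesis
    by (simp flip: card_ballot_maps_catalan)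
qed

lemma upt_caterpillar: "[0..<n] \<in> caterpillars n"
  by (simp add: caterpillars_def atLeast0LessThan)

lemma cat_clade_upt: "i < n \<Longrightarrow> cat_clade [0..<n] i = {..i}"
  by (auto simp: cat_clade_def take_upt atLeast0AtMost[symmetric] atLeastLessThanSuc_atLeastAtMost)

definition adjacent_swap :: "nat \<Rightarrow> nat \<Rightarrow> nat list" where
  "adjacent_swap n p = map (transpose p (Suc p)) [0..<n]"

lemma adjacent_swap_caterpillar:
  assumes "Suc p < n"
  shows "adjacent_swap n p \<in> caterpillars n"
  using assms by (simp add: adjacent_swap_def caterpillars_def distinct_map atLeast0LessThan)

lemma cat_clade_adjacent_swap:
  assumes "i < n"
  shows "cat_clade (adjacent_swap n p) i = transpose p (Suc p) ` {..i}"
proof -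
  have "cat_clade (adjacent_swap n p) i = transpose p (Suc p) ` cat_clade [0..<n] i"
    by (simp only: adjacent_swap_def cat_clade_def take_map set_map)
  then show ?thesis
    using cat_clade_upt[OF assms] by simp
qed

lemma adjacent_swap_not_same_topology:
  assumes "1 \<le> p" "Suc p < n"
  shows "\<not> same_topology n (adjacent_swap n p) [0..<n]"
proof -
  have "Suc p \<in> cat_clade (adjacent_swap n p) p" "Suc p \<notin> cat_clade [0..<n] p"
    using assms by (auto simp: cat_clade_adjacent_swap cat_clade_upt image_iff intro: bexI[of _ p])
  then show ?thesis
    using assms unfolding same_topology_def by force
qed

lemma adjacent_swap_coalescent_history:
  assumes h: "h \<in> ballot_maps (n - 1) (n - 1)" and hp: "h p \<noteq> p"
  shows "coalescent_history n (adjacent_swap n p) [0..<n] h"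
proof -
  have "cat_clade (adjacent_swap n p) v \<subseteq> cat_clade [0..<n] (h v)"
    if v: "v \<in> {1..n - 1}" for v
  proof -
    have hv: "v \<le> h v" "h v < n"
      using h v by (auto simp: ballot_maps_def PiE_def Pi_def)
    have "transpose p (Suc p) ` {..v} \<subseteq> {..h v}"
    proof (cases "v = p")
      case True
      then have "Suc p \<le> h v"
        using hv hp by auto
      then show ?thesis
        using True by (auto simp: transpose_def)
    next
      case False
      then have "transpose p (Suc p) ` {..v} = {..v}"
        by (intro transpose_image_eq) auto
      then show ?thesis
        using hv by auto
    qed
    then show ?thesis
      using v hv by (simp add: cat_clade_adjacent_swap cat_clade_upt)
  qed
  then show ?thesis
    using h by (auto simp: coalescent_history_def ballot_maps_def)
qed

lemma adjacent_swap_num_histories_ge: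
  assumes p: "1 \<le> p" "Suc p < n"
  shows "catalan (n - 1) - catalan p * catalan (n - 1 - p)
           \<le> real (num_histories n (adjacent_swap n p) [0..<n])"
proof -
  define B F H where "B = ballot_maps (n - 1) (n - 1)" and "F = {h \<in> B. h p = p}"
    and "H = {h \<in> {1..n - 1} \<rightarrow>\<^sub>E {1..n - 1}. coalescent_history n (adjacent_swap n p) [0..<n] h}"
  have "B - F \<subseteq> H"
  proof
    fix h assume "h \<in> B - F"
    then have "h \<in> ballot_maps (n - 1) (n - 1)" "h p \<noteq> p"
      by (auto simp: B_def F_def)
    then show "h \<in> H"
      using adjacent_swap_coalescent_history[of h n p] unfolding H_def ballot_maps_def by blast
  qed
  then have "card (B - F) \<le> num_histories n (adjacent_swap n p) [0..<n]"
    unfolding num_histories_def H_def by (intro card_mono) (auto simp: finite_PiE)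
  moreover have "card (B - F) = card B - card F" "card F \<le> card B"
    by (auto simp: F_def B_def finite_ballot_maps intro: card_Diff_subset card_mono)
  moreover have "real (card F) \<le> catalan p * catalan (n - 1 - p)"
    using card_ballot_maps_fixed_le[of p "n - 1"] p
    by (simp add: F_def B_def flip: card_ballot_maps_catalan of_nat_mult)
  ultimately show ?thesis
    by (simp add: B_def flip: card_ballot_maps_catalan) linarith
qed

lemma finite_num_histories_image:
  "finite {num_histories n G S | G S.
             G \<in> caterpillars n \<and> S \<in> caterpillars n \<and> \<not> same_topology n G S}"
  by (rule finite_subset[of _ "(\<lambda>(G, S). num_histories n G S) ` (caterpillars n \<times> caterpillars n)"])
     (auto simp: finite_caterpillars)

lemma num_histories_le_max_histories:
  assumes "G \<in> caterpillars n" "S \<in> caterpillars n" "\<not> same_topology n G S"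
  shows "num_histories n G S \<le> max_histories n"
  unfolding max_histories_def using assms by (intro Max_ge finite_num_histories_image) auto

lemma max_histories_le_catalan:
  assumes "3 \<le> n"
  shows "real (max_histories n) \<le> catalan (n - 1)"
proof -
  \<comment> \<open>A witness pair is needed: the maximum of an empty set is unspecified.\<close>
  have "adjacent_swap n 1 \<in> caterpillars n" "\<not> same_topology n (adjacent_swap n 1) [0..<n]"
    using assms adjacent_swap_caterpillar[of 1 n] adjacent_swap_not_same_topology[of 1 n] by auto
  then have "max_histories n \<in> {num_histories n G S | G S.
               G \<in> caterpillars n \<and> S \<in> caterpillars n \<and> \<not> same_topology n G S}"
    unfolding max_histories_def using upt_caterpillar
    by (intro Max_in finite_num_histories_image) blast+
  then obtain G S where "G \<in> caterpillars n" "max_histories n = num_histories n G S"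
    by blast
  then show ?thesis
    using num_histories_le_catalan by simp
qed

lemma max_histories_ge:
  assumes "1 \<le> p" "Suc p < n"
  shows "catalan (n - 1) - catalan p * catalan (n - 1 - p) \<le> real (max_histories n)"
proof -
  have "num_histories n (adjacent_swap n p) [0..<n] \<le> max_histories n"
    using assms
    by (intro num_histories_le_max_histories adjacent_swap_caterpillar upt_caterpillar
        adjacent_swap_not_same_topology) auto
  then show ?thesis
    using adjacent_swap_num_histories_ge[OF assms] by linarith
qed

theorem corollary3:
  shows "(\<lambda>n. real (max_histories n) / catalan (n - 1)) \<longlonglongrightarrow> 1"
proof (rule tendsto_sandwich[where f = "\<lambda>n. 1 - 16 / real n" and h = "\<lambda>_. 1"])
  show "\<forall>\<^sub>F n in sequentially. 1 - 16 / real n \<le> real (max_histories n) / catalan (n - 1)"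
    using eventually_ge_at_top[of 3]
  proof eventually_elim
    case (elim n)
    have "(1 - 16 / real n) * catalan (n - 1)
            \<le> catalan (n - 1) - catalan (n div 2) * catalan (n - 1 - n div 2)"
      using catalan_balanced_product_le[of n] elim by (simp add: algebra_simps)
    also have "\<dots> \<le> real (max_histories n)"
      using elim by (intro max_histories_ge) auto
    finally show ?case
      by (simp add: catalan_pos pos_le_divide_eq)
  qed
  show "\<forall>\<^sub>F n in sequentially. real (max_histories n) / catalan (n - 1) \<le> 1"
    using eventually_ge_at_top[of 3]
  proof eventually_elim
    case (elim n)
    show ?case
      using max_histories_le_catalan[OF elim] catalan_pos[of "n - 1"] by simp
  qed
  show "(\<lambda>n. 1 - 16 / real n) \<longlonglongrightarrow> 1"
    using tendsto_diff[OF tendsto_const lim_const_over_n[of 16]] by simp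
qed simp

end
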